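(* Let $\mathcal R_1=\{(0^m1^m,2^m):m\ge0\}\subseteq\{0,1\}^*\times\{2\}^*$. For every $\varepsilon>0$, $\mathcal R_1$ can be computed by a probabilistic finite state transducer with probability $1-\varepsilon$. $\mathcal R_1$ cannot be computed by a deterministic finite state transducer.
   Context: A probabilistic finite state transducer (pfst) is a tuple $T=(Q,\Sigma_1,\Sigma_2,V,f,q_0,Q_{\rm acc},Q_{\rm rej})$ with finite state set $Q$, finite input/output alphabets $\Sigma_1,\Sigma_2$, initial state $q_0$, disjoint accepting/rejecting sets $Q_{\rm acc},Q_{\rm rej}\subseteq Q$ (the other states are non-halting). For each $a\in\Sigma_1\cup\{\ddagger,\$\}$ ($\ddagger,\$$ are end markers) there is a stochastic $Q\times Q$ matrix $V_a$ and an output function $f_a:Q\to\Sigma_2^*$; $V_\$$ puts all probability on halting states. On input $v$ the machine reads $\ddagger v\$$; in state $q$ reading $a$ it appends $f_a(q)$ to the output tape and moves to state $p$ with probability $(V_a)_{qp}$; if $p$ is accepting (rejecting) it halts and accepts with the current output (rejects). $T(w|v)$ is the probability of accepting with output $w$ on input $v$. A deterministic finite state transducer (dfst) is a pfst all of whose matrix entries are $0$ or $1$. For $\alpha>1/2$, $T$ computes $\mathcal R\subseteq\Sigma_1^*\times\Sigma_2^*$ with probability $\alpha$ if for all $v,w$: $(v,w)\in\mathcal R\Rightarrow T(w|v)\ge\alpha$ and $(v,w)\notin\mathcal R\Rightarrow T(w|v)\le1-\alpha$. (A dfst computes $\mathcal R$ if it does so with some probability $\alpha>1/2$, equivalently $T(w|v)=1$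 iff $(v,w)\in\mathcal R$.) *)

theory Defs
  imports Complex_Main
begin

text \<open>Tape symbols: an input letter, the left end marker (double dagger) or the right end marker (dollar).\<close>
datatype 'a tsym = Sym 'a | LMark | RMark

text \<open>A (probabilistic) finite state transducer. States are natural numbers; Q is the
(finite) state set. V a q p is the matrix entry (V_a)_{qp}; f a q is the output f_a(q).\<close>
record ('a, 'b) fst =
  states :: "nat set"
  init :: nat
  acc :: "nat set"
  rej :: "nat set"
  trans :: "'a tsym \<Rightarrow> nat \<Rightarrow> nat \<Rightarrow> real"
  out :: "'a tsym \<Rightarrow> nat \<Rightarrow> 'b list"

definition tape_alph :: "'a set \<Rightarrow> 'a tsym set" where
  "tape_alph S = Sym ` S \<union> {LMark, RMark}"

definition pfst :: "('a, 'b) fst \<Rightarrow> 'a set \<Rightarrow> 'b set \<Rightarrow> bool" where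
  "pfst T S1 S2 \<longleftrightarrow>
     finite (states T) \<and> finite S1 \<and> finite S2 \<and>
     init T \<in> states T \<and> acc T \<subseteq> states T \<and> rej T \<subseteq> states T \<and> acc T \<inter> rej T = {} \<and>
     (\<forall>a\<in>tape_alph S1. \<forall>q\<in>states T.
        (\<forall>p. 0 \<le> trans T a q p) \<and> (\<forall>p. p \<notin> states T \<longrightarrow> trans T a q p = 0) \<and>
        (\<Sum>p\<in>states T. trans T a q p) = 1 \<and>
        out T a q \<in> lists S2) \<and>
     (\<forall>q\<in>states T. \<forall>p. trans T RMark q p \<noteq> 0 \<longrightarrow> p \<in> acc T \<union> rej T)"

definition dfst :: "('a, 'b) fst \<Rightarrow> 'a set \<Rightarrow> 'b set \<Rightarrow> bool" where
  "dfst T S1 S2 \<longleftrightarrow> pfst T S1 S2 \<and>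
     (\<forall>a\<in>tape_alph S1. \<forall>q\<in>states T. \<forall>p\<in>states T. trans T a q p \<in> {0, 1})"

text \<open>acc_from T q u xs w: probability that, being in state q with output u written so far
and with xs left to read, the machine halts accepting with output exactly w.\<close>
fun acc_from :: "('a, 'b) fst \<Rightarrow> nat \<Rightarrow> 'b list \<Rightarrow> 'a tsym list \<Rightarrow> 'b list \<Rightarrow> real" where
  "acc_from T q u [] w = 0"
| "acc_from T q u (a # xs) w =
     (\<Sum>p\<in>states T. trans T a q p *
        (if p \<in> acc T then (if u @ out T a q = w then 1 else 0)
         else if p \<in> rej T then 0
         else acc_from T p (u @ out T a q) xs w))"

definition accprob :: "('a, 'b) fst \<Rightarrow> 'b list \<Rightarrow> 'a list \<Rightarrow> real" where
  "accprob T w v = acc_from T (init T) [] (LMark # map Sym v @ [RMark]) w"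

definition computes_with_prob ::
  "('a, 'b) fst \<Rightarrow> 'a set \<Rightarrow> 'b set \<Rightarrow> ('a list \<times> 'b list) set \<Rightarrow> real \<Rightarrow> bool" where
  "computes_with_prob T S1 S2 R \<alpha> \<longleftrightarrow> \<alpha> > 1/2 \<and>
     (\<forall>v\<in>lists S1. \<forall>w\<in>lists S2.
        ((v, w) \<in> R \<longrightarrow> accprob T w v \<ge> \<alpha>) \<and>
        ((v, w) \<notin> R \<longrightarrow> accprob T w v \<le> 1 - \<alpha>))"

definition R1 :: "(nat list \<times> nat list) set" where
  "R1 = {(replicate m 0 @ replicate m 1, replicate m 2) | m. True}"

end

theory Submission
  imports Defs
begin

text \<open>For \<open>k \<ge> 1/\<epsilon>\<close> the probabilistic transducer picks a branch \<open>j < k\<close> uniformly at random.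
  Branch \<open>j\<close> checks that the input lies in \<open>0\<^sup>*1\<^sup>*\<close>, gives every 0 the weight \<open>j\<close> and every 1
  the weight \<open>k - j\<close>, writes a 2 whenever the running total passes a multiple of \<open>k\<close>, and
  accepts iff the final total is divisible by \<open>k\<close>. On \<open>0\<^sup>m1\<^sup>m\<close> every branch outputs
  exactly \<open>2\<^sup>m\<close>. For any other pair, the total \<open>j\<cdot>#0 + (k - j)\<cdot>#1\<close> can equal \<open>k\<cdot>|w|\<close>
  for at most one \<open>j\<close>: two such \<open>j\<close> force \<open>#0 = #1\<close>, and then the sorted input is
  \<open>0\<^sup>m1\<^sup>m\<close> with output \<open>2\<^sup>m\<close>. Hence wrong pairs are accepted with probability at most \<open>1/k\<close>.

  A deterministic transducer either halts while reading some prefix \<open>\<ddagger>0\<^sup>i\<close>, and then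
  cannot tell \<open>0\<^sup>i1\<^sup>i\<close> from \<open>0\<^sup>i\<^sup>+\<^sup>11\<^sup>i\<^sup>+\<^sup>1\<close>, or, by pigeonhole, it is in the same state
  after \<open>\<ddagger>0\<^sup>s\<close> and after \<open>\<ddagger>0\<^sup>t\<close> for some \<open>s \<noteq> t\<close>. In the latter case the rest of the
  run on \<open>1\<^sup>s$\<close> is the same, so accepting \<open>(0\<^sup>s1\<^sup>s, 2\<^sup>s)\<close> also accepts \<open>0\<^sup>t1\<^sup>s\<close> with some output.\<close>

section \<open>Acceptance probabilities\<close>

lemma acc_from_Cons_point_mass:
  assumes "finite (states T)" "d \<in> states T"
    and "\<And>p. p \<in> states T \<Longrightarrow> trans T a q p = (if p = d then 1 else 0)"
  shows "acc_from T q u (a # xs) w =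
    (if d \<in> acc T then (if u @ out T a q = w then 1 else 0)
     else if d \<in> rej T then 0 else acc_from T d (u @ out T a q) xs w)"
proof -
  let ?G = "\<lambda>p. if p \<in> acc T then (if u @ out T a q = w then 1 else 0)
     else if p \<in> rej T then 0 else acc_from T p (u @ out T a q) xs w"
  have "acc_from T q u (a # xs) w = (\<Sum>p\<in>states T. if p = d then ?G p else 0)"
    using assms(3) by (auto intro: sum.cong)
  then show ?thesis
    using assms(1,2) by simp
qed

lemma acc_from_append_output: "acc_from T q (u @ e) xs (u @ w) = acc_from T q e xs w"
proof (induction xs arbitrary: q e)
  case (Cons a xs)
  show ?case
    unfolding acc_from.simps by (intro sum.cong refl) (simp add: Cons.IH[of _ "e @ out T a q", simplified])
qed simp

lemma acc_from_nonzero_imp_prefix: "acc_from T q u xs w \<noteq> 0 \<Longrightarrow> \<exists>w'. w = u @ w'"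
proof (induction xs arbitrary: q u)
  case (Cons a xs)
  then obtain p where "trans T a q p *
        (if p \<in> acc T then (if u @ out T a q = w then 1 else 0)
         else if p \<in> rej T then 0 else acc_from T p (u @ out T a q) xs w) \<noteq> 0"
    by (metis (no_types, lifting) acc_from.simps(2) sum.neutral)
  then show ?case
    using Cons.IH by (auto split: if_splits) (metis append.assoc)
qed simp

lemma computes_with_prob_accepts:
  assumes "computes_with_prob T S1 S2 R \<alpha>" "(v, w) \<in> R" "v \<in> lists S1" "w \<in> lists S2"
  shows "accprob T w v > 1/2"
proof -
  have "\<alpha> > 1/2" "accprob T w v \<ge> \<alpha>"
    using assms unfolding computes_with_prob_def by blast+
  then show ?thesis
    by linarith
qed

lemma computes_with_prob_accprob_less:
  assumes "computes_with_prob T S1 S2 R \<alpha>"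
    and "(v, w) \<in> R" "v \<in> lists S1" "w \<in> lists S2"
    and "(v', w') \<notin> R" "v' \<in> lists S1" "w' \<in> lists S2"
  shows "accprob T w' v' < accprob T w v"
proof -
  have "\<alpha> > 1/2" "accprob T w v \<ge> \<alpha>" "accprob T w' v' \<le> 1 - \<alpha>"
    using assms unfolding computes_with_prob_def by blast+
  then show ?thesis
    by linarith
qed

lemma R1_zeros_ones_iff:
  "(replicate s 0 @ replicate t 1, w) \<in> R1 \<longleftrightarrow> s = t \<and> w = replicate s 2"
proof
  assume "(replicate s 0 @ replicate t 1, w) \<in> R1"
  then obtain m where v: "replicate s 0 @ replicate t 1 = replicate m (0::nat) @ replicate m 1"
    and "w = replicate m 2"
    unfolding R1_def by blast
  moreover have "s = m" "t = m"
    using arg_cong[OF v, of "\<lambda>v. count_list v 0"] arg_cong[OF v, of "\<lambda>v. count_list v 1"]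
    by (simp_all add: count_list_eq_length_filter)
  ultimately show "s = t \<and> w = replicate s 2"
    by simp
next
  assume "s = t \<and> w = replicate s 2"
  then show "(replicate s 0 @ replicate t 1, w) \<in> R1"
    unfolding R1_def by blast
qed

section \<open>A probabilistic transducer for R1\<close>

definition letter_weight :: "nat \<Rightarrow> nat \<Rightarrow> nat \<Rightarrow> nat" where
  "letter_weight k j x = (if x = 0 then j else k - j)"

definition branch_total :: "nat \<Rightarrow> nat \<Rightarrow> nat list \<Rightarrow> nat" where
  "branch_total k j v = sum_list (map (letter_weight k j) v)"

text \<open>States 0, 1, 2 are the initial, accepting and rejecting state. Branch \<open>j\<close> with running
  total \<open>\<equiv> r (mod k)\<close> is in state \<open>counter_state k j ph r\<close>, where the phase \<open>ph\<close> is the last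
  letter read (initially 0), so that a 0 after a 1 can be rejected.\<close>
definition counter_state :: "nat \<Rightarrow> nat \<Rightarrow> nat \<Rightarrow> nat \<Rightarrow> nat" where
  "counter_state k j ph r = 3 + ph + 2 * (r + k * j)"

definition phase_of :: "nat \<Rightarrow> nat" where
  "phase_of q = (q - 3) mod 2"

definition residue_of :: "nat \<Rightarrow> nat \<Rightarrow> nat" where
  "residue_of k q = (q - 3) div 2 mod k"

definition branch_of :: "nat \<Rightarrow> nat \<Rightarrow> nat" where
  "branch_of k q = (q - 3) div 2 div k"

definition counter_next :: "nat \<Rightarrow> nat tsym \<Rightarrow> nat \<Rightarrow> nat" where
  "counter_next k a q = (if q < 3 then 2 else case a of
      Sym x \<Rightarrow>
        if x \<le> 1 \<and> phase_of q \<le> x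
        then counter_state k (branch_of k q) x
          ((residue_of k q + letter_weight k (branch_of k q) x) mod k)
        else 2
    | RMark \<Rightarrow> if residue_of k q = 0 then 1 else 2
    | LMark \<Rightarrow> 2)"

definition counter_out :: "nat \<Rightarrow> nat tsym \<Rightarrow> nat \<Rightarrow> nat list" where
  "counter_out k a q = (case a of
      Sym x \<Rightarrow> replicate ((residue_of k q + letter_weight k (branch_of k q) x) div k) 2
    | _ \<Rightarrow> [])"

definition start_states :: "nat \<Rightarrow> nat set" where
  "start_states k = (\<lambda>j. counter_state k j 0 0) ` {..<k}"

definition counter_trans :: "nat \<Rightarrow> nat tsym \<Rightarrow> nat \<Rightarrow> nat \<Rightarrow> real" where
  "counter_trans k a q p =
    (if q = 0 \<and> a = LMark then (if p \<in> start_states k then 1 / real k else 0)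
     else if p = counter_next k a q then 1 else 0)"

definition counter_pfst :: "nat \<Rightarrow> (nat, nat) fst" where
  "counter_pfst k = \<lparr>states = {..<3 + 2 * (k * k)}, init = 0, acc = {1}, rej = {2},
     trans = counter_trans k, out = counter_out k\<rparr>"

lemma counter_pfst_simps [simp]:
  "states (counter_pfst k) = {..<3 + 2 * (k * k)}" "init (counter_pfst k) = 0"
  "acc (counter_pfst k) = {1}" "rej (counter_pfst k) = {2}"
  "trans (counter_pfst k) = counter_trans k" "out (counter_pfst k) = counter_out k"
  unfolding counter_pfst_def by simp_all

lemma counter_state_decode:
  assumes "ph \<le> 1" "r < k"
  shows "phase_of (counter_state k j ph r) = ph"
    and "residue_of k (counter_state k j ph r) = r"
    and "branch_of k (counter_state k j ph r) = j"
proof -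
  have "counter_state k j ph r - 3 = ph + 2 * (r + k * j)"
    by (simp add: counter_state_def)
  moreover have "(ph + 2 * (r + k * j)) mod 2 = ph" "(ph + 2 * (r + k * j)) div 2 = r + k * j"
    using assms(1) by (auto simp: le_Suc_eq)
  moreover have "(r + k * j) mod k = r" "(r + k * j) div k = j"
    using assms(2) by simp_all
  ultimately show "phase_of (counter_state k j ph r) = ph"
    and "residue_of k (counter_state k j ph r) = r"
    and "branch_of k (counter_state k j ph r) = j"
    unfolding phase_of_def residue_of_def branch_of_def by presburger+
qed

lemma counter_state_bounds:
  assumes "ph \<le> 1" "r < k" "j < k"
  shows "3 \<le> counter_state k j ph r" and "counter_state k j ph r < 3 + 2 * (k * k)"
proof -
  have "r + k * j + 1 \<le> k * (j + 1)"
    using assms by simp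
  also have "\<dots> \<le> k * k"
    using assms by (intro mult_le_mono2) simp
  finally show "counter_state k j ph r < 3 + 2 * (k * k)"
    unfolding counter_state_def using assms by simp
qed (simp add: counter_state_def)

lemma branch_of_less:
  assumes "0 < k" "q < 3 + 2 * (k * k)"
  shows "branch_of k q < k"
proof -
  have "0 < k * k"
    using assms(1) by simp
  then have "(q - 3) div 2 < k * k"
    using assms(2) by (intro less_mult_imp_div_less) linarith
  then show ?thesis
    unfolding branch_of_def by (rule less_mult_imp_div_less)
qed

lemma counter_next_less:
  assumes "0 < k" "q < 3 + 2 * (k * k)"
  shows "counter_next k a q < 3 + 2 * (k * k)"
  using assms branch_of_less[OF assms] counter_state_bounds(2)
  unfolding counter_next_def by (auto split: tsym.splits)

lemma inj_on_start_state: "inj_on (\<lambda>j. counter_state k j 0 0) {..<k}"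
  by (auto simp: inj_on_def counter_state_def)

lemma card_start_states: "card (start_states k) = k"
  unfolding start_states_def by (simp add: card_image[OF inj_on_start_state])

lemma start_states_bounds: "p \<in> start_states k \<Longrightarrow> 3 \<le> p \<and> p < 3 + 2 * (k * k)"
  unfolding start_states_def using counter_state_bounds by auto

lemma pfst_counter_pfst:
  assumes "0 < k"
  shows "pfst (counter_pfst k) {0, 1} {2}"
proof -
  let ?Q = "{..<3 + 2 * (k * k)}"
  have "(\<Sum>p\<in>?Q. counter_trans k a q p) = 1" if "q \<in> ?Q" for a q
  proof (cases "q = 0 \<and> a = LMark")
    case True
    then have "(\<Sum>p\<in>?Q. counter_trans k a q p) = (\<Sum>p\<in>start_states k. 1 / real k)"
      using start_states_bounds[of _ k]
      by (simp add: counter_trans_def sum.If_cases Int_absorb1 subset_iff)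
    then show ?thesis
      using assms by (simp add: card_start_states)
  next
    case False
    then have "(\<Sum>p\<in>?Q. counter_trans k a q p) = (\<Sum>p\<in>?Q. if p = counter_next k a q then 1 else 0)"
      by (intro sum.cong) (auto simp: counter_trans_def)
    then show ?thesis
      using counter_next_less[OF assms, of q a] that by simp
  qed
  moreover have "counter_trans k a q p = 0" if "q \<in> ?Q" "p \<notin> ?Q" for a q p
    using that counter_next_less[OF assms] start_states_bounds[of p k]
    unfolding counter_trans_def by auto
  moreover have "p \<in> {1, 2}" if "counter_trans k RMark q p \<noteq> 0" for q p
    using that unfolding counter_trans_def counter_next_def by (auto split: if_splits)
  moreover have "0 \<le> counter_trans k a q p" for a q p
    unfolding counter_trans_def by simp
  ultimately show ?thesis
    unfolding pfst_def by (auto simp: counter_out_def split: tsym.splits) blast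
qed

lemma acc_from_counter_pfst_Cons:
  assumes "0 < k" "q < 3 + 2 * (k * k)" "q \<noteq> 0 \<or> a \<noteq> LMark"
  shows "acc_from (counter_pfst k) q u (a # xs) w =
    (if counter_next k a q = 1 then (if u @ counter_out k a q = w then 1 else 0)
     else if counter_next k a q = 2 then 0
     else acc_from (counter_pfst k) (counter_next k a q) (u @ counter_out k a q) xs w)"
proof -
  have "acc_from (counter_pfst k) q u (a # xs) w =
    (if counter_next k a q \<in> acc (counter_pfst k) then (if u @ out (counter_pfst k) a q = w then 1 else 0)
     else if counter_next k a q \<in> rej (counter_pfst k) then 0
     else acc_from (counter_pfst k) (counter_next k a q) (u @ out (counter_pfst k) a q) xs w)"
    using counter_next_less[OF assms(1,2)] assms(3)
    by (intro acc_from_Cons_point_mass) (auto simp: counter_trans_def)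
  then show ?thesis
    by (simp del: acc_from.simps)
qed

lemma acc_from_counter_state_RMark:
  assumes "0 < k" "ph \<le> 1" "r < k" "j < k"
  shows "acc_from (counter_pfst k) (counter_state k j ph r) u [RMark] w = of_bool (r = 0 \<and> w = u)"
  using acc_from_counter_pfst_Cons[OF assms(1) counter_state_bounds(2)[OF assms(2-4)]]
    counter_state_bounds(1)[OF assms(2-4)] counter_state_decode[OF assms(2,3)]
  by (auto simp: counter_next_def counter_out_def)

lemma acc_from_counter_state_Sym:
  assumes "0 < k" "ph \<le> 1" "r < k" "j < k" "x \<le> 1"
  shows "acc_from (counter_pfst k) (counter_state k j ph r) u (Sym x # xs) w =
    (if ph \<le> x
     then acc_from (counter_pfst k) (counter_state k j x ((r + letter_weight k j x) mod k))
       (u @ replicate ((r + letter_weight k j x) div k) 2) xs w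
     else 0)"
proof -
  have "3 \<le> counter_state k j x ((r + letter_weight k j x) mod k)"
    using assms(1,4,5) by (intro counter_state_bounds(1)) simp_all
  then show ?thesis
    using acc_from_counter_pfst_Cons[OF assms(1) counter_state_bounds(2)[OF assms(2-4)]]
      counter_state_bounds(1)[OF assms(2-4)] counter_state_decode[OF assms(2,3)] assms(5)
    by (auto simp: counter_next_def counter_out_def)
qed

lemma acc_from_counter_state:
  assumes "0 < k" "j < k"
  shows "ph \<le> 1 \<Longrightarrow> r < k \<Longrightarrow> set v \<subseteq> {0, 1} \<Longrightarrow>
    acc_from (counter_pfst k) (counter_state k j ph r) u (map Sym v @ [RMark]) w =
    of_bool (sorted (ph # v) \<and> k dvd (r + branch_total k j v) \<and>
      w = u @ replicate ((r + branch_total k j v) div k) 2)"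
proof (induction v arbitrary: ph r u)
  case Nil
  have "k dvd r \<longleftrightarrow> r = 0"
    using Nil.prems(2) by (auto dest: dvd_imp_le)
  then show ?case
    using acc_from_counter_state_RMark[OF assms(1) Nil.prems(1,2) assms(2)] Nil.prems(2)
    by (auto simp: branch_total_def)
next
  case (Cons x v)
  have x: "x \<le> 1" and v: "set v \<subseteq> {0, 1}"
    using Cons.prems(3) by auto
  show ?case
  proof (cases "ph \<le> x")
    case True
    define A where "A = r + letter_weight k j x"
    define S where "S = branch_total k j v"
    have A_decomp: "A + S = (A mod k + S) + A div k * k"
      by simp
    have div_eq: "A div k + (A mod k + S) div k = (A + S) div k"
      unfolding A_decomp using assms(1) by (intro div_mult_self1[symmetric]) simp
    have dvd_eq: "k dvd (A mod k + S) \<longleftrightarrow> k dvd (A + S)"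
      by (simp add: dvd_eq_mod_eq_0 mod_add_left_eq)
    have sorted_eq: "sorted (x # v) \<longleftrightarrow> sorted (ph # x # v)"
      using True by (auto intro: order_trans)
    have total_eq: "r + branch_total k j (x # v) = A + S"
      unfolding A_def S_def branch_total_def by simp
    have "acc_from (counter_pfst k) (counter_state k j ph r) u (map Sym (x # v) @ [RMark]) w =
      acc_from (counter_pfst k) (counter_state k j x (A mod k)) (u @ replicate (A div k) 2)
        (map Sym v @ [RMark]) w"
      using acc_from_counter_state_Sym[OF assms(1) Cons.prems(1,2) assms(2) x] True
      unfolding A_def by (simp del: acc_from.simps)
    also have "\<dots> = of_bool (sorted (x # v) \<and> k dvd (A mod k + S) \<and>
        w = (u @ replicate (A div k) 2) @ replicate ((A mod k + S) div k) 2)"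
      unfolding S_def using Cons.IH[OF x _ v] assms(1) by simp
    also have "\<dots> = of_bool (sorted (ph # x # v) \<and> k dvd (A + S) \<and>
        w = u @ replicate ((A + S) div k) 2)"
      unfolding append.assoc replicate_add[symmetric] div_eq dvd_eq sorted_eq ..
    finally show ?thesis
      unfolding total_eq .
  next
    case False
    then show ?thesis
      using acc_from_counter_state_Sym[OF assms(1) Cons.prems(1,2) assms(2) x] by simp
  qed
qed

definition branch_accepts :: "nat \<Rightarrow> nat \<Rightarrow> nat list \<Rightarrow> nat list \<Rightarrow> bool" where
  "branch_accepts k j v w \<longleftrightarrow>
     sorted v \<and> k dvd branch_total k j v \<and> w = replicate (branch_total k j v div k) 2"

lemma accprob_counter_pfst:
  assumes "0 < k" "set v \<subseteq> {0, 1}"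
  shows "accprob (counter_pfst k) w v = card {j \<in> {..<k}. branch_accepts k j v w} / k"
proof -
  let ?M = "counter_pfst k" and ?rest = "map Sym v @ [RMark]"
  have "accprob ?M w v = (\<Sum>p<3 + 2 * (k * k).
      if p \<in> start_states k then acc_from ?M p [] ?rest w / k else 0)"
    unfolding accprob_def acc_from.simps(2) counter_pfst_simps
    by (intro sum.cong) (auto simp: counter_trans_def counter_out_def dest: start_states_bounds)
  also have "\<dots> = (\<Sum>p\<in>start_states k. acc_from ?M p [] ?rest w / k)"
    using start_states_bounds[of _ k] by (simp add: sum.If_cases Int_absorb1 subset_iff)
  also have "\<dots> = (\<Sum>j<k. acc_from ?M (counter_state k j 0 0) [] ?rest w / k)"
    unfolding start_states_def by (simp add: sum.reindex[OF inj_on_start_state])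
  also have "\<dots> = (\<Sum>j<k. of_bool (branch_accepts k j v w) / k)"
    using acc_from_counter_state[OF assms(1) _ _ _ assms(2)] assms(1)
    by (intro sum.cong) (simp_all add: branch_accepts_def)
  also have "\<dots> = card {j \<in> {..<k}. branch_accepts k j v w} / k"
    by (simp add: sum_divide_distrib[symmetric] Int_def)
  finally show ?thesis .
qed

lemma branch_total_eq_counts:
  "set v \<subseteq> {0, 1} \<Longrightarrow> branch_total k j v = j * count_list v 0 + (k - j) * count_list v 1"
  by (induction v) (auto simp: branch_total_def letter_weight_def)

lemma sorted_01_eq_replicate:
  "sorted v \<Longrightarrow> set v \<subseteq> {0, 1} \<Longrightarrow>
    v = replicate (count_list v 0) (0::nat) @ replicate (count_list v 1) 1"
proof (induction v)
  case (Cons x v)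
  show ?case
  proof (cases "x = 0")
    case False
    then have "x = 1" "0 \<notin> set v"
      using Cons.prems by fastforce+
    then show ?thesis
      using Cons by simp
  qed (use Cons in simp)
qed simp

lemma branch_accepts_R1:
  assumes "0 < k" "j \<le> k"
  shows "branch_accepts k j (replicate m 0 @ replicate m 1) (replicate m 2)"
proof -
  have "branch_total k j (replicate m 0 @ replicate m 1) = k * m"
    using assms(2)
    by (simp add: branch_total_eq_counts count_list_eq_length_filter set_replicate_conv_if
        add_mult_distrib[symmetric])
  then show ?thesis
    using assms(1) unfolding branch_accepts_def by (simp add: sorted_append)
qed

lemma weighted_counts_eq:
  fixes j1 j2 k a b :: nat
  assumes "j1 \<le> k" "j2 \<le> k" "j1 \<noteq> j2" "j1 * a + (k - j1) * b = j2 * a + (k - j2) * b"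
  shows "a = b"
proof -
  have "int j1 * int a + (int k - int j1) * int b = int j2 * int a + (int k - int j2) * int b"
    using arg_cong[OF assms(4), of int] assms(1,2) by (simp add: of_nat_diff)
  then have "(int j1 - int j2) * (int a - int b) = 0"
    by (simp add: algebra_simps)
  then show ?thesis
    using assms(3) by simp
qed

lemma branch_accepts_total:
  assumes "0 < k" "branch_accepts k j v w"
  shows "branch_total k j v = k * length w"
  using assms unfolding branch_accepts_def by (auto elim!: dvdE)

lemma branch_accepts_unique:
  assumes "0 < k" "set v \<subseteq> {0, 1}" "(v, w) \<notin> R1" "j1 \<le> k" "j2 \<le> k"
    and accepts: "branch_accepts k j1 v w" "branch_accepts k j2 v w"
  shows "j1 = j2"
proof (rule ccontr)
  assume "j1 \<noteq> j2"
  let ?a = "count_list v 0" and ?b = "count_list v 1"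
  have total: "j1 * ?a + (k - j1) * ?b = k * length w" "j2 * ?a + (k - j2) * ?b = k * length w"
    using branch_accepts_total[OF assms(1) accepts(1)] branch_accepts_total[OF assms(1) accepts(2)]
    unfolding branch_total_eq_counts[OF assms(2)] by simp_all
  have "?a = ?b"
    by (rule weighted_counts_eq[OF assms(4,5) \<open>j1 \<noteq> j2\<close> trans[OF total(1) total(2)[symmetric]]])
  then have "k * ?a = k * length w"
    using total(1) assms(4) by (simp add: add_mult_distrib[symmetric])
  then have "length w = ?a"
    using assms(1) by simp
  moreover have "w = replicate (length w) 2"
    using accepts(1) unfolding branch_accepts_def by (metis length_replicate)
  ultimately have w: "w = replicate ?a 2"
    by metis
  have v: "v = replicate ?a 0 @ replicate ?a 1"
    using sorted_01_eq_replicate[OF _ assms(2)] accepts(1) \<open>?a = ?b\<close>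
    unfolding branch_accepts_def by metis
  have "(replicate ?a 0 @ replicate ?a 1, replicate ?a 2) \<in> R1"
    unfolding R1_zeros_ones_iff by simp
  then show False
    using assms(3) v w by metis
qed

lemma R1_pfst_computable:
  assumes "0 < \<epsilon>" "\<epsilon> < 1/2"
  shows "\<exists>T. pfst T {0, 1} {2} \<and> computes_with_prob T {0, 1} {2} R1 (1 - \<epsilon>)"
proof -
  obtain k :: nat where k: "1 / \<epsilon> \<le> k"
    using real_arch_simple by blast
  then have "0 < k"
    using assms(1) by (auto intro: ccontr)
  have "1 / k \<le> \<epsilon>"
    using k assms(1) \<open>0 < k\<close> by (simp add: field_simps)
  have "computes_with_prob (counter_pfst k) {0, 1} {2} R1 (1 - \<epsilon>)"
    unfolding computes_with_prob_def
  proof (intro conjI ballI impI)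
    show "1 / 2 < 1 - \<epsilon>"
      using assms(2) by simp
  next
    fix v w assume v: "v \<in> lists {0, 1}" and "w \<in> lists {2}" "(v, w) \<in> R1"
    from v have "set v \<subseteq> {0, 1}"
      by auto
    from \<open>(v, w) \<in> R1\<close> obtain m where m: "v = replicate m 0 @ replicate m 1" "w = replicate m 2"
      unfolding R1_def by blast
    then have "{j \<in> {..<k}. branch_accepts k j v w} = {..<k}"
      using branch_accepts_R1[OF \<open>0 < k\<close>] by auto
    then show "1 - \<epsilon> \<le> accprob (counter_pfst k) w v"
      using accprob_counter_pfst[OF \<open>0 < k\<close> \<open>set v \<subseteq> {0, 1}\<close>] \<open>0 < k\<close> assms(1) by simp
  next
    fix v w assume v: "v \<in> lists {0, 1}" and "w \<in> lists {2}" "(v, w) \<notin> R1"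
    from v have "set v \<subseteq> {0, 1}"
      by auto
    have "j1 = j2" if "j1 \<in> {j \<in> {..<k}. branch_accepts k j v w}"
      "j2 \<in> {j \<in> {..<k}. branch_accepts k j v w}" for j1 j2
      by (rule branch_accepts_unique[OF \<open>0 < k\<close> \<open>set v \<subseteq> {0, 1}\<close> \<open>(v, w) \<notin> R1\<close>])
        (use that in auto)
    then have "real (card {j \<in> {..<k}. branch_accepts k j v w}) \<le> 1"
      by (simp add: card_le_Suc0_iff_eq)
    then have "accprob (counter_pfst k) w v \<le> 1 / k"
      unfolding accprob_counter_pfst[OF \<open>0 < k\<close> \<open>set v \<subseteq> {0, 1}\<close>]
      by (rule divide_right_mono) simp
    then show "accprob (counter_pfst k) w v \<le> 1 - (1 - \<epsilon>)"
      using \<open>1 / k \<le> \<epsilon>\<close> by simp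
  qed
  then show ?thesis
    using pfst_counter_pfst[OF \<open>0 < k\<close>] by blast
qed

section \<open>Deterministic transducers\<close>

lemma dfst_point_mass:
  assumes "dfst T S1 S2" "q \<in> states T" "a \<in> tape_alph S1"
  shows "\<exists>d\<in>states T. \<forall>p\<in>states T. trans T a q p = (if p = d then 1 else 0)"
proof -
  let ?D = "{p \<in> states T. trans T a q p = 1}"
  have zero_one: "\<forall>p\<in>states T. trans T a q p \<in> {0, 1}"
    and "finite (states T)" and "(\<Sum>p\<in>states T. trans T a q p) = 1"
    using assms unfolding dfst_def pfst_def by auto
  moreover have "(\<Sum>p\<in>states T. trans T a q p) = (\<Sum>p\<in>states T. if p \<in> ?D then 1 else 0)"
    using zero_one by (intro sum.cong) auto
  ultimately have "card ?D = 1"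
    by (simp add: sum.If_cases Int_def)
  then obtain d where "?D = {d}"
    by (rule card_1_singletonE)
  then show ?thesis
    using zero_one by (intro bexI[of _ d]) auto
qed

definition det_next :: "('a, 'b) fst \<Rightarrow> 'a tsym \<Rightarrow> nat \<Rightarrow> nat" where
  "det_next T a q =
    (SOME d. d \<in> states T \<and> (\<forall>p\<in>states T. trans T a q p = (if p = d then 1 else 0)))"

lemma det_next:
  assumes "dfst T S1 S2" "q \<in> states T" "a \<in> tape_alph S1"
  shows "det_next T a q \<in> states T"
    and "\<And>p. p \<in> states T \<Longrightarrow> trans T a q p = (if p = det_next T a q then 1 else 0)"
proof -
  have "det_next T a q \<in> states T \<and>
    (\<forall>p\<in>states T. trans T a q p = (if p = det_next T a q then 1 else 0))"
    unfolding det_next_def by (rule someI_ex) (use dfst_point_mass[OF assms] in blast)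
  then show "det_next T a q \<in> states T"
    and "\<And>p. p \<in> states T \<Longrightarrow> trans T a q p = (if p = det_next T a q then 1 else 0)"
    by blast+
qed

lemma acc_from_dfst_Cons:
  assumes "dfst T S1 S2" "q \<in> states T" "a \<in> tape_alph S1"
  shows "acc_from T q u (a # xs) w =
    (if det_next T a q \<in> acc T then (if u @ out T a q = w then 1 else 0)
     else if det_next T a q \<in> rej T then 0
     else acc_from T (det_next T a q) (u @ out T a q) xs w)"
  using assms(1) det_next[OF assms] by (intro acc_from_Cons_point_mass) (auto simp: dfst_def pfst_def)

fun det_run :: "('a, 'b) fst \<Rightarrow> nat \<Rightarrow> 'b list \<Rightarrow> 'a tsym list \<Rightarrow> (nat \<times> 'b list) option" where
  "det_run T q u [] = Some (q, u)"
| "det_run T q u (a # xs) =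
     (if det_next T a q \<in> acc T \<or> det_next T a q \<in> rej T then None
      else det_run T (det_next T a q) (u @ out T a q) xs)"

lemma det_run_Some:
  assumes "dfst T S1 S2"
  shows "det_run T q u xs = Some (q', u') \<Longrightarrow> q \<in> states T \<Longrightarrow> set xs \<subseteq> tape_alph S1 \<Longrightarrow>
    u \<in> lists S2 \<Longrightarrow>
    q' \<in> states T \<and> u' \<in> lists S2 \<and> acc_from T q u (xs @ ys) w = acc_from T q' u' ys w"
proof (induction xs arbitrary: q u)
  case (Cons a xs)
  have a: "a \<in> tape_alph S1"
    using Cons.prems by auto
  have running: "det_next T a q \<notin> acc T" "det_next T a q \<notin> rej T"
    using Cons.prems(1) by (auto split: if_splits)
  have "out T a q \<in> lists S2"
    using assms Cons.prems(2) a unfolding dfst_def pfst_def by auto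
  then show ?case
    using Cons.IH Cons.prems running det_next(1)[OF assms Cons.prems(2) a]
      acc_from_dfst_Cons[OF assms Cons.prems(2) a] by simp
qed simp

lemma det_run_None:
  assumes "dfst T S1 S2"
  shows "det_run T q u xs = None \<Longrightarrow> q \<in> states T \<Longrightarrow> set xs \<subseteq> tape_alph S1 \<Longrightarrow>
    acc_from T q u (xs @ ys) w = acc_from T q u (xs @ zs) w"
proof (induction xs arbitrary: q u)
  case (Cons a xs)
  have a: "a \<in> tape_alph S1"
    using Cons.prems by auto
  show ?case
    using Cons.IH Cons.prems det_next(1)[OF assms Cons.prems(2) a]
    by (cases "det_next T a q \<in> acc T \<or> det_next T a q \<in> rej T")
      (auto simp add: acc_from_dfst_Cons[OF assms Cons.prems(2) a] simp del: acc_from.simps(2))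
qed simp

lemma tape_prefix_subset: "set x \<subseteq> S \<Longrightarrow> set (LMark # map Sym x) \<subseteq> tape_alph S"
  unfolding tape_alph_def by auto

lemma accprob_append_eq_acc_from:
  "accprob T w (x @ y) = acc_from T (init T) [] ((LMark # map Sym x) @ map Sym y @ [RMark]) w"
  unfolding accprob_def by simp

lemma dfst_accprob_after_run:
  assumes "dfst T S1 S2" "set x \<subseteq> S1"
    and "det_run T (init T) [] (LMark # map Sym x) = Some (p, h)"
  shows "p \<in> states T" and "h \<in> lists S2"
    and "accprob T w (x @ y) = acc_from T p h (map Sym y @ [RMark]) w"
proof -
  have "init T \<in> states T"
    using assms(1) unfolding dfst_def pfst_def by auto
  then have "p \<in> states T \<and> h \<in> lists S2 \<and>
      acc_from T (init T) [] ((LMark # map Sym x) @ ys) w = acc_from T p h ys w" for ys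
    using det_run_Some[OF assms(1,3)] tape_prefix_subset[OF assms(2)] by blast
  then show "p \<in> states T" "h \<in> lists S2"
    and "accprob T w (x @ y) = acc_from T p h (map Sym y @ [RMark]) w"
    unfolding accprob_append_eq_acc_from by blast+
qed

lemma dfst_accprob_after_halt:
  assumes "dfst T S1 S2" "set x \<subseteq> S1"
    and "det_run T (init T) [] (LMark # map Sym x) = None"
  shows "accprob T w (x @ y) = accprob T w (x @ z)"
proof -
  have "init T \<in> states T"
    using assms(1) unfolding dfst_def pfst_def by auto
  then show ?thesis
    using det_run_None[OF assms(1,3)] tape_prefix_subset[OF assms(2)]
    unfolding accprob_append_eq_acc_from by blast
qed

lemma dfst_halting_on_zeros_not_computes_R1:
  assumes "dfst T {0, 1} {2}"
    and "det_run T (init T) [] (LMark # map Sym (replicate i 0)) = None"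
  shows "\<not> computes_with_prob T {0, 1} {2} R1 \<alpha>"
proof
  assume computes: "computes_with_prob T {0, 1} {2} R1 \<alpha>"
  let ?w = "replicate i (2::nat)"
  have "accprob T ?w (replicate i 0 @ replicate i 1) =
      accprob T ?w (replicate i 0 @ 0 # replicate (Suc i) 1)"
    using dfst_accprob_after_halt[OF assms(1) _ assms(2), of ?w "replicate i 1" "0 # replicate (Suc i) 1"]
    by (simp add: set_replicate_conv_if)
  also have "\<dots> = accprob T ?w (replicate (Suc i) 0 @ replicate (Suc i) 1)"
    by (simp add: replicate_app_Cons_same)
  moreover have "(replicate i 0 @ replicate i 1, ?w) \<in> R1"
    and "(replicate (Suc i) 0 @ replicate (Suc i) 1, ?w) \<notin> R1"
    unfolding R1_zeros_ones_iff by simp_all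
  then have "accprob T ?w (replicate (Suc i) 0 @ replicate (Suc i) 1) <
      accprob T ?w (replicate i 0 @ replicate i 1)"
    by (intro computes_with_prob_accprob_less[OF computes]) auto
  ultimately show False
    by simp
qed

lemma dfst_merging_zeros_not_computes_R1:
  assumes dfst: "dfst T {0, 1} {2}" and "s \<noteq> t"
    and run_s: "det_run T (init T) [] (LMark # map Sym (replicate s 0)) = Some (p, h)"
    and run_t: "det_run T (init T) [] (LMark # map Sym (replicate t 0)) = Some (p, h')"
  shows "\<not> computes_with_prob T {0, 1} {2} R1 \<alpha>"
proof
  assume computes: "computes_with_prob T {0, 1} {2} R1 \<alpha>"
  let ?y = "replicate s (1::nat)"
  have zeros: "set (replicate i (0::nat)) \<subseteq> {0, 1}" for i
    by auto
  note after_s = dfst_accprob_after_run[OF dfst zeros run_s]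
  note after_t = dfst_accprob_after_run[OF dfst zeros run_t]
  have "(replicate s 0 @ ?y, replicate s 2) \<in> R1" and "(replicate t 0 @ ?y, w) \<notin> R1" for w
    unfolding R1_zeros_ones_iff using \<open>s \<noteq> t\<close> by simp_all
  note R1_facts = this
  have "accprob T (replicate s 2) (replicate s 0 @ ?y) > 1/2"
    by (rule computes_with_prob_accepts[OF computes R1_facts(1)]) auto
  then have "acc_from T p h (map Sym ?y @ [RMark]) (replicate s 2) \<noteq> 0"
    using after_s(3) by auto
  then obtain w' where w': "replicate s 2 = h @ w'"
    using acc_from_nonzero_imp_prefix by blast
  have "accprob T (h' @ w') (replicate t 0 @ ?y) = acc_from T p [] (map Sym ?y @ [RMark]) w'"
    using after_t(3) acc_from_append_output[of T p h' "[]"] by auto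
  also have "\<dots> = accprob T (replicate s 2) (replicate s 0 @ ?y)"
    using after_s(3) acc_from_append_output[of T p h "[]"] w' by auto
  moreover have "set w' \<subseteq> set (replicate s (2::nat))"
    unfolding w' by simp
  then have "h' @ w' \<in> lists {2}"
    using after_t(2) by (auto split: if_splits)
  then have "accprob T (h' @ w') (replicate t 0 @ ?y) <
      accprob T (replicate s 2) (replicate s 0 @ ?y)"
    by (intro computes_with_prob_accprob_less[OF computes R1_facts(1) _ _ R1_facts(2)]) auto
  ultimately show False
    by simp
qed

lemma R1_not_dfst_computable: "\<not> (dfst T {0, 1} {2} \<and> computes_with_prob T {0, 1} {2} R1 \<alpha>)"
proof
  assume "dfst T {0, 1} {2} \<and> computes_with_prob T {0, 1} {2} R1 \<alpha>"
  then have dfst: "dfst T {0, 1} {2}" and computes: "computes_with_prob T {0, 1} {2} R1 \<alpha>"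
    by blast+
  define run where "run i = the (det_run T (init T) [] (LMark # map Sym (replicate i (0::nat))))" for i
  have "det_run T (init T) [] (LMark # map Sym (replicate i 0)) \<noteq> None" for i
    using dfst_halting_on_zeros_not_computes_R1[OF dfst] computes by blast
  then have run:
      "det_run T (init T) [] (LMark # map Sym (replicate i 0)) = Some (fst (run i), snd (run i))" for i
    unfolding run_def by fastforce
  let ?n = "card (states T)"
  have "(fst \<circ> run) ` {..?n} \<subseteq> states T"
    using dfst_accprob_after_run(1)[OF dfst _ run] by (auto simp: set_replicate_conv_if)
  then have "\<not> inj_on (fst \<circ> run) {..?n}"
    using card_inj_on_le[of "fst \<circ> run" "{..?n}" "states T"] dfst unfolding dfst_def pfst_def by auto
  then obtain s t where "s \<noteq> t" "fst (run s) = fst (run t)"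
    unfolding inj_on_def by auto
  then show False
    using dfst_merging_zeros_not_computes_R1[OF dfst _ run[of s]] run[of t] computes by metis
qed

theorem theorem4:
  shows "(\<forall>\<epsilon>::real. 0 < \<epsilon> \<and> \<epsilon> < 1/2 \<longrightarrow>
            (\<exists>T :: (nat, nat) fst. pfst T {0, 1} {2} \<and>
                computes_with_prob T {0, 1} {2} R1 (1 - \<epsilon>)))
       \<and> \<not> (\<exists>T :: (nat, nat) fst. dfst T {0, 1} {2} \<and>
                (\<exists>\<alpha>. computes_with_prob T {0, 1} {2} R1 \<alpha>))"
  using R1_pfst_computable R1_not_dfst_computable by blast

end
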